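(* Let $q=p^f$ be a prime power and $N>2$ an integer with $N\mid(q-1)$; put $k=(q-1)/N$. Let $\gamma$ be a primitive element of $\mathbb{F}_q$, $C_0=\langle\gamma^N\rangle$, and let $\eta_a=\sum_{x\in\gamma^aC_0}\psi(x)$, $0\le a\le N-1$. Suppose the $\eta_a$ take exactly three distinct rational values $\alpha_1,\alpha_2,\alpha_3$, and for $i=1,2,3$ let $I_i=\{a\in\mathbb{Z}_N:\eta_a=\alpha_i\}$. Then $$|I_1|=-\frac{\alpha_2\alpha_3(q-1)+k(q-k+\alpha_2+\alpha_3)}{k(\alpha_1-\alpha_2)(\alpha_3-\alpha_1)},\quad |I_2|=-\frac{\alpha_1\alpha_3(q-1)+k(q-k+\alpha_1+\alpha_3)}{k(\alpha_1-\alpha_2)(\alpha_2-\alpha_3)},$$ $$|I_3|=-\frac{\alpha_1\alpha_2(q-1)+k(q-k+\alpha_1+\alpha_2)}{k(\alpha_2-\alpha_3)(\alpha_3-\alpha_1)}.$$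
   Context: $\psi$ is the canonical additive character of $\mathbb{F}_q$: $\psi(x)=\xi_p^{\mathrm{Tr}_{q/p}(x)}$, where $\xi_p$ is a complex primitive $p$-th root of unity and $\mathrm{Tr}_{q/p}$ is the absolute trace. *)

theory Defs
  imports Complex_Main "HOL-Computational_Algebra.Primes"
begin

definition abs_trace :: "nat \<Rightarrow> nat \<Rightarrow> 'a::field \<Rightarrow> 'a" where
  "abs_trace p f x = (\<Sum>i<f. x ^ (p ^ i))"

text \<open>The trace lies in the prime field {of_nat j | j < p}; its representative in {0..p-1}.\<close>
definition trace_nat :: "nat \<Rightarrow> nat \<Rightarrow> 'a::field \<Rightarrow> nat" where
  "trace_nat p f x = (THE j. j < p \<and> of_nat j = abs_trace p f x)"

text \<open>Canonical additive character psi(x) = xi^(Tr(x)), xi a primitive p-th root of unity.\<close>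
definition add_char :: "complex \<Rightarrow> nat \<Rightarrow> nat \<Rightarrow> 'a::field \<Rightarrow> complex" where
  "add_char \<xi> p f x = \<xi> ^ trace_nat p f x"

definition cyc_class0 :: "nat \<Rightarrow> 'a::field \<Rightarrow> 'a set" where
  "cyc_class0 N \<gamma> = {\<gamma> ^ (N * j) | j. True}"

definition gauss_period :: "complex \<Rightarrow> nat \<Rightarrow> nat \<Rightarrow> nat \<Rightarrow> 'a::field \<Rightarrow> nat \<Rightarrow> complex" where
  "gauss_period \<xi> p f N \<gamma> a = (\<Sum>x\<in>((\<lambda>c. \<gamma> ^ a * c) ` cyc_class0 N \<gamma>). add_char \<xi> p f x)"

definition primitive_elem :: "'a::{field,finite} \<Rightarrow> bool" where
  "primitive_elem \<gamma> \<longleftrightarrow> \<gamma> \<noteq> 0 \<and> (\<forall>n. 0 < n \<and> n < card (UNIV :: 'a set) - 1 \<longrightarrow> \<gamma> ^ n \<noteq> 1)"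

end

theory Submission
  imports Defs "HOL-Computational_Algebra.Polynomial" "HOL-Number_Theory.Cong"
begin

text \<open>
  The Gauss periods satisfy two moment identities. The classes \<open>\<gamma>^a C_0\<close> partition the nonzero
  field elements and \<open>\<psi>\<close> is a nontrivial additive character, so
  \<open>\<Sum>_a \<eta>_a = \<Sum>_{x \<noteq> 0} \<psi>(x) = -1\<close>. Writing \<open>y = x t\<close> with \<open>t \<in> C_0\<close>,
  \<open>\<Sum>_a |\<eta>_a|^2 = \<Sum>_a \<Sum>_{x, y \<in> \<gamma>^a C_0} \<psi>(x - y) = \<Sum>_{t \<in> C_0} \<Sum>_{x \<noteq> 0} \<psi>((1 - t) x)\<close>;
  the term \<open>t = 1\<close> contributes \<open>q - 1\<close> and each of the other \<open>k - 1\<close> terms contributes \<open>-1\<close>,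
  so this sum is \<open>q - k\<close>. As the \<open>\<eta>_a\<close> are real, \<open>\<Sum>_a (\<eta>_a - \<alpha>_2)(\<eta>_a - \<alpha>_3)\<close> equals
  \<open>|I_1| (\<alpha>_1 - \<alpha>_2)(\<alpha>_1 - \<alpha>_3)\<close> on the one hand and \<open>(q - k) + (\<alpha>_2 + \<alpha>_3) + \<alpha>_2 \<alpha>_3 N\<close>,
  with \<open>N = (q - 1) / k\<close>, on the other; similarly for \<open>I_2\<close> and \<open>I_3\<close>.
\<close>

lemma prime_CHAR_finite_field: "prime CHAR('a::{field,finite})"
  by (intro prime_CHAR_semidom finite_imp_CHAR_pos) simp

lemma CHAR_eq_prime:
  assumes "prime p" and "of_nat p = (0::'a::field)"
  shows "CHAR('a) = p"
proof -
  have "CHAR('a) dvd p"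
    using assms(2) by (simp add: of_nat_eq_0_iff_char_dvd)
  then show ?thesis
    using assms(1) by (auto simp: prime_nat_iff)
qed

lemma inj_on_of_nat_CHAR: "inj_on (of_nat :: nat \<Rightarrow> 'a::semiring_1_cancel) {..<CHAR('a)}"
  by (auto intro!: inj_onI simp: of_nat_eq_iff_cong_CHAR cong_def)

lemma card_UNIV_field_ge_2: "card (UNIV :: 'a::{field,finite} set) \<ge> 2"
proof -
  have "card {0::'a, 1} \<le> card (UNIV :: 'a set)"
    by (rule card_mono) auto
  then show ?thesis
    by simp
qed

lemma power_card_UNIV_eq_self:
  fixes x :: "'a::{field,finite}"
  shows "x ^ card (UNIV :: 'a set) = x"
proof (cases "x = 0")
  case False
  let ?U = "UNIV - {0::'a}"
  have "(\<Prod>y\<in>?U. x * y) = (\<Prod>y\<in>?U. y)"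
    by (rule prod.reindex_bij_witness[of _ "\<lambda>y. y / x" "\<lambda>y. x * y"]) (use False in auto)
  then have "x ^ card ?U * (\<Prod>y\<in>?U. y) = 1 * (\<Prod>y\<in>?U. y)"
    by (simp add: prod.distrib)
  then have "x ^ card ?U = 1"
    by (subst (asm) mult_cancel_right) auto
  moreover have "card (UNIV :: 'a set) = Suc (card ?U)"
    using card_UNIV_field_ge_2[where 'a = 'a] by (simp add: card_Diff_singleton)
  ultimately show ?thesis
    by (simp only: power_Suc mult_1_right)
qed (use card_UNIV_field_ge_2[where 'a = 'a] in simp)

lemma of_nat_power_CHAR:
  assumes "prime CHAR('a::comm_semiring_1)"
  shows "(of_nat j :: 'a) ^ CHAR('a) = of_nat j"
proof (induction j)
  case 0
  show ?case
    using prime_gt_0_nat[OF assms] by (simp add: zero_power)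
next
  case (Suc j)
  then show ?case
    using freshmans_dream[OF assms refl, of "of_nat j" 1] by (simp add: add.commute)
qed

lemma card_power_fixed_points_le:
  assumes "n \<ge> 2"
  shows "card {z :: 'a::idom. z ^ n = z} \<le> n"
proof -
  define P :: "'a poly" where "P = monom 1 n - monom 1 1"
  have "coeff P n = 1"
    using assms by (simp add: P_def)
  then have "P \<noteq> 0"
    by auto
  moreover have "degree P \<le> n"
    unfolding P_def using assms by (intro degree_diff_le order.trans[OF degree_monom_le]) auto
  moreover have "{z. poly P z = 0} = {z. z ^ n = z}"
    by (simp add: P_def poly_monom)
  ultimately show ?thesis
    using card_poly_roots_bound[of P] by simp
qed

lemma power_CHAR_fixed_points:
  "{z :: 'a::{field,finite}. z ^ CHAR('a) = z} = of_nat ` {..<CHAR('a)}"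
proof (rule sym, rule card_seteq)
  show "of_nat ` {..<CHAR('a)} \<subseteq> {z :: 'a. z ^ CHAR('a) = z}"
    using of_nat_power_CHAR[OF prime_CHAR_finite_field] by auto
  have "card {z :: 'a. z ^ CHAR('a) = z} \<le> CHAR('a)"
    using prime_ge_2_nat[OF prime_CHAR_finite_field] by (rule card_power_fixed_points_le)
  also have "CHAR('a) = card (of_nat ` {..<CHAR('a)} :: 'a set)"
    using inj_on_of_nat_CHAR[where 'a = 'a] by (simp add: card_image)
  finally show "card {z :: 'a. z ^ CHAR('a) = z} \<le> card (of_nat ` {..<CHAR('a)} :: 'a set)" .
qed simp

lemma abs_trace_add:
  fixes x y :: "'a::{field,finite}"
  shows "abs_trace CHAR('a) f (x + y) = abs_trace CHAR('a) f x + abs_trace CHAR('a) f y"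
  unfolding abs_trace_def
  by (simp add: freshmans_dream'[OF prime_CHAR_finite_field refl] sum.distrib)

lemma abs_trace_power_CHAR:
  fixes x :: "'a::{field,finite}"
  assumes "card (UNIV :: 'a set) = CHAR('a) ^ f"
  shows "abs_trace CHAR('a) f x ^ CHAR('a) = abs_trace CHAR('a) f x"
proof -
  let ?p = "CHAR('a)"
  have "abs_trace ?p f x ^ ?p = (\<Sum>i<f. x ^ ?p ^ Suc i)"
    unfolding abs_trace_def
    by (simp add: freshmans_dream_sum[OF prime_CHAR_finite_field refl] mult.commute
        flip: power_mult)
  also have "\<dots> = (\<Sum>i<Suc f. x ^ ?p ^ i) - x"
    by (simp only: sum.lessThan_Suc_shift) simp
  also have "\<dots> = abs_trace ?p f x"
    using power_card_UNIV_eq_self[of x] assms by (simp add: abs_trace_def)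
  finally show ?thesis .
qed

lemma trace_nat_eqI:
  fixes x :: "'a::{field,finite}"
  assumes "j < CHAR('a)" and "of_nat j = abs_trace CHAR('a) f x"
  shows "trace_nat CHAR('a) f x = j"
  unfolding trace_nat_def
proof (rule the_equality)
  fix i
  assume "i < CHAR('a) \<and> of_nat i = abs_trace CHAR('a) f x"
  then show "i = j"
    using assms inj_on_eq_iff[OF inj_on_of_nat_CHAR[where 'a = 'a], of i j] by simp
qed (use assms in blast)

lemma trace_nat_correct:
  fixes x :: "'a::{field,finite}"
  assumes "card (UNIV :: 'a set) = CHAR('a) ^ f"
  shows "trace_nat CHAR('a) f x < CHAR('a)"
    and "of_nat (trace_nat CHAR('a) f x) = abs_trace CHAR('a) f x"
proof -
  have "abs_trace CHAR('a) f x \<in> of_nat ` {..<CHAR('a)}"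
    using abs_trace_power_CHAR[OF assms, of x] by (simp flip: power_CHAR_fixed_points)
  then obtain j where j: "j < CHAR('a)" "of_nat j = abs_trace CHAR('a) f x"
    by auto
  then have "trace_nat CHAR('a) f x = j"
    by (rule trace_nat_eqI)
  with j show "trace_nat CHAR('a) f x < CHAR('a)"
    and "of_nat (trace_nat CHAR('a) f x) = abs_trace CHAR('a) f x"
    by simp_all
qed

lemma trace_nat_add:
  fixes x y :: "'a::{field,finite}"
  assumes "card (UNIV :: 'a set) = CHAR('a) ^ f"
  shows "trace_nat CHAR('a) f (x + y) = (trace_nat CHAR('a) f x + trace_nat CHAR('a) f y) mod CHAR('a)"
proof (rule trace_nat_eqI)
  show "(trace_nat CHAR('a) f x + trace_nat CHAR('a) f y) mod CHAR('a) < CHAR('a)"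
    using prime_gt_0_nat[OF prime_CHAR_finite_field[where 'a = 'a]] by simp
  show "of_nat ((trace_nat CHAR('a) f x + trace_nat CHAR('a) f y) mod CHAR('a))
      = abs_trace CHAR('a) f (x + y)"
    unfolding abs_trace_add trace_nat_correct(2)[OF assms, symmetric] of_nat_add[symmetric]
    unfolding of_nat_eq_iff_cong_CHAR cong_def by simp
qed

lemma abs_trace_nonzero:
  assumes "card (UNIV :: 'a::{field,finite} set) = CHAR('a) ^ f"
  shows "\<exists>x :: 'a. abs_trace CHAR('a) f x \<noteq> 0"
proof (rule ccontr)
  let ?p = "CHAR('a)"
  define T :: "'a poly" where "T = (\<Sum>i<f. monom 1 (?p ^ i))"
  assume "\<not> (\<exists>x :: 'a. abs_trace ?p f x \<noteq> 0)"
  then have roots: "{x. poly T x = 0} = UNIV"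
    by (simp add: T_def abs_trace_def poly_sum poly_monom)
  have p: "1 < ?p"
    using prime_gt_1_nat[OF prime_CHAR_finite_field] .
  have f: "0 < f"
    using card_UNIV_field_ge_2[where 'a = 'a] assms by (cases f) auto
  have "coeff T (?p ^ (f - 1)) = 1"
    using p f by (simp add: T_def coeff_sum power_inject_exp)
  then have "T \<noteq> 0"
    by auto
  moreover have "degree T \<le> ?p ^ (f - 1)"
    unfolding T_def using p
    by (intro degree_sum_le order.trans[OF degree_monom_le] power_increasing) auto
  ultimately have "card (UNIV :: 'a set) \<le> ?p ^ (f - 1)"
    using card_poly_roots_bound[of T] roots by simp
  moreover have "?p ^ (f - 1) < ?p ^ f"
    using p f by (intro power_strict_increasing) auto
  ultimately show False
    using assms by simp
qed

locale nontrivial_add_char =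
  fixes \<psi> :: "'a::{field,finite} \<Rightarrow> complex"
  assumes add: "\<psi> (x + y) = \<psi> x * \<psi> y"
    and norm: "norm (\<psi> x) = 1"
    and nontrivial: "\<exists>y. \<psi> y \<noteq> 1"
begin

lemma zero: "\<psi> 0 = 1"
proof -
  have "\<psi> 0 * \<psi> 0 = \<psi> 0 * 1"
    using add[of 0 0] by simp
  moreover have "\<psi> 0 \<noteq> 0"
    using norm[of 0] by auto
  ultimately show ?thesis
    by simp
qed

lemma cnj: "cnj (\<psi> x) = \<psi> (- x)"
proof -
  have "\<psi> x * cnj (\<psi> x) = \<psi> x * \<psi> (- x)"
    using complex_norm_square[of "\<psi> x"] by (simp add: norm zero flip: add)
  moreover have "\<psi> x \<noteq> 0"
    using norm[of x] by auto
  ultimately show ?thesis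
    by simp
qed

lemma sum_UNIV: "(\<Sum>x\<in>UNIV. \<psi> x) = 0"
proof -
  obtain y where y: "\<psi> y \<noteq> 1"
    using nontrivial by blast
  have "(\<Sum>x\<in>UNIV. \<psi> x) = (\<Sum>x\<in>UNIV. \<psi> (y + x))"
    by (rule sum.reindex_bij_witness[of _ "\<lambda>x. y + x" "\<lambda>x. x - y"]) auto
  also have "\<dots> = \<psi> y * (\<Sum>x\<in>UNIV. \<psi> x)"
    by (simp add: add sum_distrib_left)
  finally have "(1 - \<psi> y) * (\<Sum>x\<in>UNIV. \<psi> x) = 0"
    by (simp add: algebra_simps)
  then show ?thesis
    using y by simp
qed

lemma sum_nonzero_scaled:
  "(\<Sum>x\<in>UNIV - {0}. \<psi> (c * x)) = (if c = 0 then of_nat (card (UNIV :: 'a set)) else 0) - 1"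
proof -
  have "(\<Sum>x\<in>UNIV. \<psi> (c * x)) = (if c = 0 then of_nat (card (UNIV :: 'a set)) else 0)"
  proof (cases "c = 0")
    case False
    have "(\<Sum>x\<in>UNIV. \<psi> (c * x)) = (\<Sum>x\<in>UNIV. \<psi> x)"
      by (rule sum.reindex_bij_witness[of _ "\<lambda>x. x / c" "\<lambda>x. c * x"]) (use False in auto)
    with False show ?thesis
      by (simp add: sum_UNIV)
  qed (simp add: zero)
  then show ?thesis
    by (simp add: sum_diff1 zero)
qed

end

lemma nontrivial_add_char_add_char:
  fixes \<xi> :: complex
  assumes "prime p" and "of_nat p = (0::'a::{field,finite})"
    and "card (UNIV :: 'a set) = p ^ f"
    and "\<xi> ^ p = 1" and "\<forall>j. 0 < j \<and> j < p \<longrightarrow> \<xi> ^ j \<noteq> 1"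
  shows "nontrivial_add_char (add_char \<xi> p f :: 'a \<Rightarrow> complex)"
proof -
  have p: "CHAR('a) = p"
    using assms(1,2) by (rule CHAR_eq_prime)
  note card = assms(3)[folded p]
  have \<xi>_mod: "\<xi> ^ (n mod p) = \<xi> ^ n" for n
  proof -
    have "\<xi> ^ n = \<xi> ^ (p * (n div p) + n mod p)"
      by simp
    also have "\<dots> = (\<xi> ^ p) ^ (n div p) * \<xi> ^ (n mod p)"
      by (simp only: power_add power_mult)
    finally show ?thesis
      using assms(4) by simp
  qed
  show ?thesis
  proof
    fix x y :: 'a
    have "trace_nat p f (x + y) = (trace_nat p f x + trace_nat p f y) mod p"
      using trace_nat_add[OF card] p by simp
    then show "add_char \<xi> p f (x + y) = add_char \<xi> p f x * add_char \<xi> p f y"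
      by (simp add: add_char_def \<xi>_mod power_add)
    have "norm \<xi> ^ p = 1"
      using assms(4) by (simp flip: norm_power)
    then have "norm \<xi> = 1"
      using power_eq_imp_eq_base[of "norm \<xi>" p 1] prime_gt_0_nat[OF assms(1)] by simp
    then show "norm (add_char \<xi> p f x) = 1"
      by (simp add: add_char_def norm_power)
  next
    obtain x :: 'a where "abs_trace p f x \<noteq> 0"
      using abs_trace_nonzero[OF card] p by blast
    then have "0 < trace_nat p f x" "trace_nat p f x < p"
      using trace_nat_correct[OF card, of x] p by (auto intro: gr0I)
    then show "\<exists>y :: 'a. add_char \<xi> p f y \<noteq> 1"
      using assms(5) by (auto simp: add_char_def)
  qed
qed

locale cyclotomic =
  fixes N :: nat and \<gamma> :: "'a::{field,finite}"
  assumes primitive: "primitive_elem \<gamma>"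
    and N_dvd: "N dvd card (UNIV :: 'a set) - 1"
    and N_pos: "0 < N"
begin

definition n :: nat where "n = card (UNIV :: 'a set) - 1"

definition k :: nat where "k = n div N"

definition cyc_class :: "nat \<Rightarrow> 'a set" where
  "cyc_class a = (\<lambda>c. \<gamma> ^ a * c) ` cyc_class0 N \<gamma>"

lemma N_mult_k: "N * k = n"
  using N_dvd by (simp add: k_def n_def)

lemma n_pos: "0 < n"
  using card_UNIV_field_ge_2[where 'a = 'a] by (simp add: n_def)

lemma k_pos: "0 < k"
  using N_mult_k n_pos by (cases k) auto

lemma nonzero: "\<gamma> \<noteq> 0"
  using primitive by (simp add: primitive_elem_def)

lemma power_n: "\<gamma> ^ n = 1"
proof -
  have "card (UNIV :: 'a set) = Suc n"
    using n_pos by (simp add: n_def)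
  then have "\<gamma> * \<gamma> ^ n = \<gamma> * 1"
    using power_card_UNIV_eq_self[of \<gamma>] by simp
  then show ?thesis
    using nonzero by simp
qed

lemma power_mod_n: "\<gamma> ^ (i mod n) = \<gamma> ^ i"
proof -
  have "\<gamma> ^ i = \<gamma> ^ (n * (i div n) + i mod n)"
    by simp
  also have "\<dots> = (\<gamma> ^ n) ^ (i div n) * \<gamma> ^ (i mod n)"
    by (simp only: power_add power_mult)
  finally show ?thesis
    by (simp add: power_n)
qed

lemma inj_on_power: "inj_on (\<lambda>i. \<gamma> ^ i) {..<n}"
proof (rule inj_onI)
  have neq: "\<gamma> ^ i \<noteq> \<gamma> ^ j" if "i < j" and "j < n" for i j
  proof
    assume "\<gamma> ^ i = \<gamma> ^ j"
    moreover have "\<gamma> ^ i * \<gamma> ^ (j - i) = \<gamma> ^ j"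
      using that by (simp flip: power_add)
    ultimately have "\<gamma> ^ i * \<gamma> ^ (j - i) = \<gamma> ^ i * 1"
      by simp
    then have "\<gamma> ^ (j - i) = 1"
      using nonzero by simp
    moreover have "0 < j - i" and "j - i < card (UNIV :: 'a set) - 1"
      using that by (auto simp: n_def)
    ultimately show False
      using primitive by (auto simp: primitive_elem_def)
  qed
  fix i j
  assume "i \<in> {..<n}" and "j \<in> {..<n}" and "\<gamma> ^ i = \<gamma> ^ j"
  then show "i = j"
    using neq[of i j] neq[of j i] by (cases i j rule: linorder_cases) auto
qed

lemma power_eq_power_iff: "\<gamma> ^ i = \<gamma> ^ j \<longleftrightarrow> i mod n = j mod n"
proof -
  have "\<gamma> ^ i = \<gamma> ^ j \<longleftrightarrow> \<gamma> ^ (i mod n) = \<gamma> ^ (j mod n)"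
    by (simp only: power_mod_n)
  also have "\<dots> \<longleftrightarrow> i mod n = j mod n"
    using n_pos by (intro inj_on_eq_iff[OF inj_on_power]) auto
  finally show ?thesis .
qed

lemma range_power: "(\<lambda>i. \<gamma> ^ i) ` {..<n} = UNIV - {0}"
proof (rule card_seteq)
  show "(\<lambda>i. \<gamma> ^ i) ` {..<n} \<subseteq> UNIV - {0}"
    using nonzero by auto
  show "card (UNIV - {0 :: 'a}) \<le> card ((\<lambda>i. \<gamma> ^ i) ` {..<n})"
    using inj_on_power by (simp add: card_image card_Diff_singleton n_def)
qed simp

lemma cyc_class_altdef: "cyc_class a = {\<gamma> ^ (a + N * j) | j. True}"
  unfolding cyc_class_def cyc_class0_def by (auto simp: power_add)

lemma cyc_class0_eq: "cyc_class0 N \<gamma> = (\<lambda>j. \<gamma> ^ (N * j)) ` {..<k}"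
proof (intro equalityI subsetI)
  fix x
  assume "x \<in> cyc_class0 N \<gamma>"
  then obtain j where x: "x = \<gamma> ^ (N * j)"
    by (auto simp: cyc_class0_def)
  have "\<gamma> ^ (N * j) = \<gamma> ^ (N * (j mod k))"
    by (simp add: power_eq_power_iff mult_mod_right N_mult_k)
  with x k_pos show "x \<in> (\<lambda>j. \<gamma> ^ (N * j)) ` {..<k}"
    by auto
qed (auto simp: cyc_class0_def)

lemma card_cyc_class0: "card (cyc_class0 N \<gamma>) = k"
proof -
  have "inj_on (\<lambda>j. \<gamma> ^ (N * j)) {..<k}"
  proof (rule inj_onI)
    fix i j
    assume "i \<in> {..<k}" and "j \<in> {..<k}" and "\<gamma> ^ (N * i) = \<gamma> ^ (N * j)"
    then have "N * i < n" and "N * j < n" and "(N * i) mod n = (N * j) mod n"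
      using N_pos by (simp_all add: power_eq_power_iff flip: N_mult_k)
    then show "i = j"
      using N_pos by simp
  qed
  then show ?thesis
    by (simp add: cyc_class0_eq card_image)
qed

lemma one_in_cyc_class0: "1 \<in> cyc_class0 N \<gamma>"
  unfolding cyc_class0_def by (auto intro: exI[of _ 0])

lemma cyc_class_nonzero: "x \<in> cyc_class a \<Longrightarrow> x \<noteq> 0"
  using nonzero by (auto simp: cyc_class_altdef)

lemma cyc_class_eq_mult:
  assumes "x \<in> cyc_class a"
  shows "cyc_class a = (\<lambda>t. x * t) ` cyc_class0 N \<gamma>"
proof (intro equalityI subsetI)
  obtain i where x: "x = \<gamma> ^ (a + N * i)"
    using assms by (auto simp: cyc_class_altdef)
  fix y
  show "y \<in> (\<lambda>t. x * t) ` cyc_class0 N \<gamma>" if y: "y \<in> cyc_class a"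
  proof -
    obtain j where y: "y = \<gamma> ^ (a + N * j)"
      using y by (auto simp: cyc_class_altdef)
    \<comment> \<open>\<open>\<gamma> ^ (N * i * (k - 1))\<close> is the inverse of \<open>\<gamma> ^ (N * i)\<close>, as \<open>N * k = n\<close>.\<close>
    have "a + N * i + N * (j + i * (k - 1)) = a + N * j + n * i"
      using k_pos by (cases k) (auto simp: N_mult_k[symmetric] algebra_simps)
    then have "\<gamma> ^ (a + N * j) = \<gamma> ^ (a + N * i + N * (j + i * (k - 1)))"
      by (simp only: power_eq_power_iff) simp
    then have "y = x * \<gamma> ^ (N * (j + i * (k - 1)))"
      by (simp add: x y power_add)
    then show ?thesis
      by (auto simp: cyc_class0_def)
  qed
  show "y \<in> cyc_class a" if y: "y \<in> (\<lambda>t. x * t) ` cyc_class0 N \<gamma>"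
  proof -
    obtain j where "y = x * \<gamma> ^ (N * j)"
      using y by (auto simp: cyc_class0_def)
    then have "y = \<gamma> ^ (a + N * (i + j))"
      by (simp add: x power_add algebra_simps)
    then show ?thesis
      by (auto simp: cyc_class_altdef)
  qed
qed

lemma cyc_classes_disjoint:
  assumes "a < N" and "b < N" and "a \<noteq> b"
  shows "cyc_class a \<inter> cyc_class b = {}"
proof (rule ccontr)
  assume "cyc_class a \<inter> cyc_class b \<noteq> {}"
  then obtain i j where "\<gamma> ^ (a + N * i) = \<gamma> ^ (b + N * j)"
    by (auto simp: cyc_class_altdef)
  then have "(a + N * i) mod n mod N = (b + N * j) mod n mod N"
    by (simp add: power_eq_power_iff)
  then have "a mod N = b mod N"
    by (simp add: mod_mod_cancel N_mult_k[symmetric])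
  with assms show False
    by simp
qed

lemma Union_cyc_classes: "(\<Union>a<N. cyc_class a) = UNIV - {0}"
proof (intro equalityI subsetI)
  fix x :: 'a
  assume "x \<in> UNIV - {0}"
  then obtain i where "x = \<gamma> ^ i"
    using range_power by blast
  then have "x = \<gamma> ^ (i mod N + N * (i div N))"
    by simp
  then have "x \<in> cyc_class (i mod N)"
    unfolding cyc_class_altdef by blast
  then show "x \<in> (\<Union>a<N. cyc_class a)"
    using N_pos by auto
qed (use cyc_class_nonzero in blast)

lemma sum_cyc_classes: "(\<Sum>a<N. \<Sum>x\<in>cyc_class a. g x) = (\<Sum>x\<in>UNIV - {0}. g x)"
proof -
  have "(\<Sum>x\<in>UNIV - {0}. g x) = (\<Sum>x\<in>(\<Union>a<N. cyc_class a). g x)"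
    by (simp only: Union_cyc_classes)
  also have "\<dots> = (\<Sum>a<N. \<Sum>x\<in>cyc_class a. g x)"
    by (rule sum.UNION_disjoint) (auto dest: cyc_classes_disjoint)
  finally show ?thesis ..
qed

end

lemma card_level_set_three_values:
  fixes r :: "'b \<Rightarrow> 'c::comm_ring_1"
  assumes "finite A" and "r ` A \<subseteq> {a1, a2, a3}"
  shows "of_nat (card {x\<in>A. r x = a1}) * ((a1 - a2) * (a1 - a3))
    = (\<Sum>x\<in>A. r x ^ 2) - (a2 + a3) * (\<Sum>x\<in>A. r x) + a2 * a3 * of_nat (card A)"
proof -
  have "of_nat (card {x\<in>A. r x = a1}) * ((a1 - a2) * (a1 - a3))
      = (\<Sum>x\<in>{x\<in>A. r x = a1}. (r x - a2) * (r x - a3))"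
    by simp
  also have "\<dots> = (\<Sum>x\<in>A. (r x - a2) * (r x - a3))"
    using assms by (intro sum.mono_neutral_left) auto
  also have "\<dots> = (\<Sum>x\<in>A. r x ^ 2 - (a2 + a3) * r x + a2 * a3)"
    by (rule sum.cong) (simp_all add: algebra_simps power2_eq_square)
  also have "\<dots> = (\<Sum>x\<in>A. r x ^ 2) - (a2 + a3) * (\<Sum>x\<in>A. r x) + a2 * a3 * of_nat (card A)"
    by (simp add: sum.distrib sum_subtractf sum_distrib_left mult.commute)
  finally show ?thesis .
qed

lemma card_level_set_from_moments:
  fixes r :: "'b \<Rightarrow> real"
  assumes "finite A" and "r ` A \<subseteq> {a1, a2, a3}" and "a1 \<noteq> a2" and "a1 \<noteq> a3"
    and "0 < k" and "real (card A) * k = q - 1"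
    and "(\<Sum>x\<in>A. r x) = -1" and "(\<Sum>x\<in>A. r x ^ 2) = q - k"
  shows "real (card {x\<in>A. r x = a1})
    = - (a2 * a3 * (q - 1) + k * (q - k + a2 + a3)) / (k * (a1 - a2) * (a3 - a1))"
proof -
  let ?c = "real (card {x\<in>A. r x = a1})"
  have c: "?c * ((a1 - a2) * (a1 - a3)) = q - k + a2 + a3 + a2 * a3 * real (card A)"
    using card_level_set_three_values[OF assms(1,2)] assms(7,8) by simp
  have "?c * (k * (a1 - a2) * (a3 - a1)) = - (k * (?c * ((a1 - a2) * (a1 - a3))))"
    by (simp add: algebra_simps)
  also have "\<dots> = - (a2 * a3 * (real (card A) * k) + k * (q - k + a2 + a3))"
    unfolding c by (simp add: algebra_simps)
  also have "\<dots> = - (a2 * a3 * (q - 1) + k * (q - k + a2 + a3))"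
    by (simp only: assms(6))
  finally show ?thesis
    using assms(3-5) by (simp add: eq_divide_eq)
qed

locale gauss_periods = cyclotomic N \<gamma> + nontrivial_add_char \<psi>
  for N :: nat and \<gamma> :: "'a::{field,finite}" and \<psi> :: "'a \<Rightarrow> complex"
begin

definition period :: "nat \<Rightarrow> complex" where
  "period a = (\<Sum>x\<in>cyc_class a. \<psi> x)"

lemma sum_periods: "(\<Sum>a<N. period a) = -1"
  using sum_nonzero_scaled[of 1] by (simp add: period_def sum_cyc_classes)

lemma period_times_cnj:
  "period a * cnj (period a) = (\<Sum>x\<in>cyc_class a. \<Sum>t\<in>cyc_class0 N \<gamma>. \<psi> ((1 - t) * x))"
proof -
  have "period a * cnj (period a) = (\<Sum>x\<in>cyc_class a. \<Sum>y\<in>cyc_class a. \<psi> (x - y))"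
    by (simp add: period_def sum_product cnj_sum cnj flip: add)
  also have "\<dots> = (\<Sum>x\<in>cyc_class a. \<Sum>t\<in>cyc_class0 N \<gamma>. \<psi> ((1 - t) * x))"
  proof (rule sum.cong[OF refl])
    fix x
    assume x: "x \<in> cyc_class a"
    have "inj_on (\<lambda>t. x * t) (cyc_class0 N \<gamma>)"
      using cyc_class_nonzero[OF x] by (auto intro: inj_onI)
    then show "(\<Sum>y\<in>cyc_class a. \<psi> (x - y)) = (\<Sum>t\<in>cyc_class0 N \<gamma>. \<psi> ((1 - t) * x))"
      by (simp add: cyc_class_eq_mult[OF x] sum.reindex algebra_simps)
  qed
  finally show ?thesis .
qed

lemma sum_period_times_cnj:
  "(\<Sum>a<N. period a * cnj (period a)) = of_nat (card (UNIV :: 'a set)) - of_nat k"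
proof -
  have "(\<Sum>a<N. period a * cnj (period a))
      = (\<Sum>x\<in>UNIV - {0}. \<Sum>t\<in>cyc_class0 N \<gamma>. \<psi> ((1 - t) * x))"
    by (simp add: period_times_cnj sum_cyc_classes)
  also have "\<dots> = (\<Sum>t\<in>cyc_class0 N \<gamma>. (if t = 1 then of_nat (card (UNIV :: 'a set)) else 0) - 1)"
    by (subst sum.swap) (simp add: sum_nonzero_scaled)
  also have "\<dots> = of_nat (card (UNIV :: 'a set)) - of_nat k"
    by (simp add: sum_subtractf one_in_cyc_class0 card_cyc_class0)
  finally show ?thesis .
qed

lemma card_period_level_set:
  assumes range: "period ` {..<N} \<subseteq> complex_of_real ` {\<alpha>1, \<alpha>2, \<alpha>3}"
    and "\<alpha>1 \<noteq> \<alpha>2" and "\<alpha>1 \<noteq> \<alpha>3"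
  shows "real (card {a\<in>{..<N}. period a = complex_of_real \<alpha>1})
    = - (\<alpha>2 * \<alpha>3 * (real (card (UNIV :: 'a set)) - 1)
        + real k * (real (card (UNIV :: 'a set)) - real k + \<alpha>2 + \<alpha>3))
      / (real k * (\<alpha>1 - \<alpha>2) * (\<alpha>3 - \<alpha>1))"
proof -
  define r where "r a = Re (period a)" for a
  have period_in: "period a \<in> complex_of_real ` {\<alpha>1, \<alpha>2, \<alpha>3}" if "a < N" for a
    using range that by auto
  have period_real: "period a = complex_of_real (r a)" if "a < N" for a
    using period_in[OF that] by (auto simp: r_def)
  have r_range: "r ` {..<N} \<subseteq> {\<alpha>1, \<alpha>2, \<alpha>3}"
  proof
    fix b
    assume "b \<in> r ` {..<N}"
    then obtain a where "a < N" and "b = r a"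
      by auto
    then show "b \<in> {\<alpha>1, \<alpha>2, \<alpha>3}"
      using period_in[of a] by (auto simp: r_def)
  qed
  have sum1: "(\<Sum>a<N. r a) = -1"
    using arg_cong[OF sum_periods, of Re] by (simp add: r_def)
  have "(\<Sum>a<N. period a * cnj (period a)) = (\<Sum>a<N. complex_of_real (r a ^ 2))"
    by (intro sum.cong) (simp_all add: period_real power2_eq_square)
  then have sum2: "(\<Sum>a<N. r a ^ 2) = real (card (UNIV :: 'a set)) - real k"
    using arg_cong[OF sum_period_times_cnj, of Re] by simp
  have Nk: "real (card {..<N}) * real k = real (card (UNIV :: 'a set)) - 1"
    using N_mult_k n_pos by (simp add: n_def of_nat_diff flip: of_nat_mult)
  have "{a\<in>{..<N}. period a = complex_of_real \<alpha>1} = {a\<in>{..<N}. r a = \<alpha>1}"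
    using period_real by auto
  moreover have "real (card {a\<in>{..<N}. r a = \<alpha>1})
      = - (\<alpha>2 * \<alpha>3 * (real (card (UNIV :: 'a set)) - 1)
          + real k * (real (card (UNIV :: 'a set)) - real k + \<alpha>2 + \<alpha>3))
        / (real k * (\<alpha>1 - \<alpha>2) * (\<alpha>3 - \<alpha>1))"
    using r_range assms(2,3) k_pos Nk sum1 sum2 by (intro card_level_set_from_moments) auto
  ultimately show ?thesis
    by simp
qed

end

theorem lemma2p2:
  fixes \<gamma> :: "'a::{field,finite}"
    and p f N k :: nat and q :: nat and \<xi> :: complex
    and \<alpha>1 \<alpha>2 \<alpha>3 :: real
  assumes "prime p" and "of_nat p = (0::'a)" and "card (UNIV :: 'a set) = p ^ f" and "q = card (UNIV :: 'a set)"
    and "\<xi> ^ p = 1" and "\<forall>j. 0 < j \<and> j < p \<longrightarrow> \<xi> ^ j \<noteq> 1"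
    and "N > 2" and "N dvd (q - 1)" and "k = (q - 1) div N"
    and "primitive_elem \<gamma>"
    and "\<alpha>1 \<in> \<rat>" and "\<alpha>2 \<in> \<rat>" and "\<alpha>3 \<in> \<rat>"
    and "\<alpha>1 \<noteq> \<alpha>2" and "\<alpha>2 \<noteq> \<alpha>3" and "\<alpha>1 \<noteq> \<alpha>3"
    and "gauss_period \<xi> p f N \<gamma> ` {0..<N} = complex_of_real ` {\<alpha>1, \<alpha>2, \<alpha>3}"
  shows "real (card {a\<in>{0..<N}. gauss_period \<xi> p f N \<gamma> a = complex_of_real \<alpha>1}) =
           - (\<alpha>2 * \<alpha>3 * (real q - 1) + real k * (real q - real k + \<alpha>2 + \<alpha>3))
             / (real k * (\<alpha>1 - \<alpha>2) * (\<alpha>3 - \<alpha>1))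
    \<and> real (card {a\<in>{0..<N}. gauss_period \<xi> p f N \<gamma> a = complex_of_real \<alpha>2}) =
           - (\<alpha>1 * \<alpha>3 * (real q - 1) + real k * (real q - real k + \<alpha>1 + \<alpha>3))
             / (real k * (\<alpha>1 - \<alpha>2) * (\<alpha>2 - \<alpha>3))
    \<and> real (card {a\<in>{0..<N}. gauss_period \<xi> p f N \<gamma> a = complex_of_real \<alpha>3}) =
           - (\<alpha>1 * \<alpha>2 * (real q - 1) + real k * (real q - real k + \<alpha>1 + \<alpha>2))
             / (real k * (\<alpha>2 - \<alpha>3) * (\<alpha>3 - \<alpha>1))"
proof -
  interpret G: gauss_periods N \<gamma> "add_char \<xi> p f"
    unfolding gauss_periods_def cyclotomic_def
    using nontrivial_add_char_add_char[OF assms(1-3,5,6)] assms(4,7,8,10) by auto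
  have period: "gauss_period \<xi> p f N \<gamma> = G.period"
    by (simp add: fun_eq_iff gauss_period_def G.period_def G.cyc_class_def)
  have k: "G.k = k"
    using assms(4,9) by (simp add: G.k_def G.n_def)
  have range: "G.period ` {..<N} \<subseteq> complex_of_real ` {\<beta>1, \<beta>2, \<beta>3}"
    if "{\<beta>1, \<beta>2, \<beta>3} = {\<alpha>1, \<alpha>2, \<alpha>3}" for \<beta>1 \<beta>2 \<beta>3
    using assms(17) that by (simp add: period atLeast0LessThan)
  have "{\<alpha>2, \<alpha>3, \<alpha>1} = {\<alpha>1, \<alpha>2, \<alpha>3}" and "{\<alpha>3, \<alpha>1, \<alpha>2} = {\<alpha>1, \<alpha>2, \<alpha>3}"
    by auto
  note levels =
    G.card_period_level_set[OF range[OF refl] assms(14,16)]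
    G.card_period_level_set[OF range[OF this(1)] assms(15) not_sym[OF assms(14)]]
    G.card_period_level_set[OF range[OF this(2)] not_sym[OF assms(16)] not_sym[OF assms(15)]]
  show ?thesis
    using levels assms(4) by (simp add: period k atLeast0LessThan ac_simps)
qed

end
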